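(* Let $\mathcal{M}=(E,\mathcal{C})$ be a loopless oriented matroid with ground set $E=\{e_1,\dots,e_m\}$ totally ordered by $e_1\prec e_2\prec\cdots\prec e_m$, and let $\mathscr{N}_k$ ($0\le k\le m$) and $\psi_k:\mathscr{N}_{k-1}\to\mathscr{N}_k$ ($1\le k\le m$) be as defined in the context. Then each $\psi_k$ is a bijection from $\mathscr{N}_{k-1}$ onto $\mathscr{N}_k$, and consequently the map sending $A\in A(\mathcal{M})$ to the unique set $N\subseteq E$ with $\psi_m\circ\psi_{m-1}\circ\cdots\circ\psi_1(\emptyset,A)=(N,\emptyset)$ is a bijection from $A(\mathcal{M})$ onto $\mathrm{NBC}(\underline{\mathcal{M}})$.
   Context: A signed subset of a finite set $E$ is a pair $X=(X^+,X^-)$ of disjoint subsets of $E$; its support is $\underline{X}=X^+\cup X^-$ and $-X=(X^-,X^+)$. An oriented matroid $\mathcal{M}=(E,\mathcal{C})$ is a finite set $E$ with a collection $\mathcal{C}$ of signed subsets (signed circuits) such that: (C1) the empty signed set is not in $\mathcal{C}$; (C2) $\mathcal{C}=-\mathcal{C}$; (C3) if $X,Y\in\mathcal{C}$ and $\underline{X}\subseteq\underline{Y}$ then $X=\pm Y$; (C4) if $X,Y\in\mathcal{C}$, $X\neq -Y$, $X\ne Y$ and $e\in X^+\cap Y^-$, then there is $Z\in\mathcal{C}$ with $Z^+\subseteq X^+\cup Y^+-\{e\}$ and $Z^-\subseteq X^-\cup Y^--\{e\}$. The underlying matroid $\underline{\mathcal{M}}$ has circuits $\{\underline{X}:X\in\mathcal{C}\}$.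 A loop is a single element forming a circuit; $\mathcal{M}$ is loopless if it has none. A signed circuit $X$ is positive if $X^-=\emptyset$; $\mathcal{M}$ is acyclic if it has no positive circuits. For $A\subseteq E$, the reorientation ${}_{-A}\mathcal{M}$ has signed circuits ${}_{-A}X$ with ${}_{-A}X^+=(X^+-A)\cup(X^-\cap A)$, ${}_{-A}X^-=(X^--A)\cup(X^+\cap A)$; for a single element we write ${}_{-e}$. $A(\mathcal{M})=\{A\subseteq E: {}_{-A}\mathcal{M}\text{ is acyclic}\}$. For $X\subseteq E$: deletion $\mathcal{M}\backslash X$ on $E-X$ has signed circuits $\{Y\in\mathcal{C}:\underline{Y}\subseteq E-X\}$; contraction $\mathcal{M}/X$ on $E-X$ has signed circuits the inclusion-minimal nonempty members (by support) of $\{(Y^+-X,Y^--X):Y\in\mathcal{C},\ \underline{Y}-X\neq\emptyset\}$. A broken circuit of $\underline{\mathcal{M}}$ is a circuit with its $\prec$-maximal element removed; $N\subseteq E$ is an NBC subset if it contains no broken circuit; $\mathrm{NBC}(\underline{\mathcal{M}})$ is the set of NBC subsets. Let $E_k=\{e_1,\dots,e_k\}$. For $N_k\subseteq E_k$ put $N_k^c=E_k-N_k$. $\mathscr{N}_k$ is the set of pairs $(N_k,A_k)$ with $N_k\subseteq E_k$, $A_k\subseteq E-E_k$, $N_k\in\mathrm{NBC}(\underline{\mathcal{M}})$, and $\mathcal{M}_k:={}_{-A_k}(\mathcal{M}\backslash N_k^c/N_k)$ (an oriented matroid on $E-E_k$) acyclic. For $(N_{k-1},A_{k-1})\in\mathscr{N}_{k-1}$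 with $\mathcal{M}_{k-1}={}_{-A_{k-1}}(\mathcal{M}\backslash N_{k-1}^c/N_{k-1})$, define $\psi_k(N_{k-1},A_{k-1})$ to be $(N_{k-1}\cup\{e_k\},A_{k-1})$ if $e_k\notin A_{k-1}$ and ${}_{-e_k}\mathcal{M}_{k-1}$ is acyclic; $(N_{k-1},A_{k-1})$ if $e_k\notin A_{k-1}$ and ${}_{-e_k}\mathcal{M}_{k-1}$ is not acyclic; $(N_{k-1},A_{k-1}-\{e_k\})$ if $e_k\in A_{k-1}$. *)

theory Defs
  imports Main
begin

text \<open>Signed subsets of a ground set are pairs (X+, X-) of sets.\<close>
type_synonym 'a signed = "'a set \<times> 'a set"

definition supp :: "'a signed \<Rightarrow> 'a set" where
  "supp X = fst X \<union> snd X"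

definition sneg :: "'a signed \<Rightarrow> 'a signed" where
  "sneg X = (snd X, fst X)"

definition signed_subset :: "'a set \<Rightarrow> 'a signed \<Rightarrow> bool" where
  "signed_subset E X \<longleftrightarrow> fst X \<subseteq> E \<and> snd X \<subseteq> E \<and> fst X \<inter> snd X = {}"

definition oriented_matroid :: "'a set \<Rightarrow> 'a signed set \<Rightarrow> bool" where
  "oriented_matroid E C \<longleftrightarrow>
     finite E \<and>
     (\<forall>X\<in>C. signed_subset E X) \<and>
     ({}, {}) \<notin> C \<and>
     (\<forall>X\<in>C. sneg X \<in> C) \<and>
     (\<forall>X\<in>C. \<forall>Y\<in>C. supp X \<subseteq> supp Y \<longrightarrow> X = Y \<or> X = sneg Y) \<and>
     (\<forall>X\<in>C. \<forall>Y\<in>C. \<forall>e. X \<noteq> sneg Y \<and> X \<noteq> Y \<and> e \<in> fst X \<inter> snd Y \<longrightarrow>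
        (\<exists>Z\<in>C. fst Z \<subseteq> (fst X \<union> fst Y) - {e} \<and> snd Z \<subseteq> (snd X \<union> snd Y) - {e}))"

definition loopless :: "'a signed set \<Rightarrow> bool" where
  "loopless C \<longleftrightarrow> \<not> (\<exists>X\<in>C. \<exists>e. supp X = {e})"

definition acyclic_om :: "'a signed set \<Rightarrow> bool" where
  "acyclic_om C \<longleftrightarrow> \<not> (\<exists>X\<in>C. snd X = {})"

definition reor :: "'a set \<Rightarrow> 'a signed \<Rightarrow> 'a signed" where
  "reor A X = ((fst X - A) \<union> (snd X \<inter> A), (snd X - A) \<union> (fst X \<inter> A))"

definition reorient :: "'a set \<Rightarrow> 'a signed set \<Rightarrow> 'a signed set" where
  "reorient A C = reor A ` C"

definition acyc_reorientations :: "'a set \<Rightarrow> 'a signed set \<Rightarrow> 'a set set" where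
  "acyc_reorientations E C = {A. A \<subseteq> E \<and> acyclic_om (reorient A C)}"

definition om_delete :: "'a set \<Rightarrow> 'a signed set \<Rightarrow> 'a set \<Rightarrow> 'a signed set" where
  "om_delete E C X = {Y\<in>C. supp Y \<subseteq> E - X}"

definition om_contract :: "'a signed set \<Rightarrow> 'a set \<Rightarrow> 'a signed set" where
  "om_contract C X =
     (let S = {(fst Y - X, snd Y - X) | Y. Y \<in> C \<and> supp Y - X \<noteq> {}}
      in {Z\<in>S. \<forall>W\<in>S. \<not> (supp W \<subset> supp Z)})"

text \<open>Broken circuits and NBC sets of the underlying matroid, order = the linear order of 'a.\<close>
definition NBC :: "'a::linorder set \<Rightarrow> 'a signed set \<Rightarrow> 'a set set" where
  "NBC E C = {N. N \<subseteq> E \<and> (\<forall>X\<in>C. \<not> (supp X - {Max (supp X)} \<subseteq> N))}"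

text \<open>e_k (1 \<le> k \<le> m) is the k-th smallest element of E; E_k = {e_1,...,e_k}.\<close>
definition elt :: "'a::linorder set \<Rightarrow> nat \<Rightarrow> 'a" where
  "elt E k = sorted_list_of_set E ! (k - 1)"

definition Eprefix :: "'a::linorder set \<Rightarrow> nat \<Rightarrow> 'a set" where
  "Eprefix E k = set (take k (sorted_list_of_set E))"

definition Mk :: "'a::linorder set \<Rightarrow> 'a signed set \<Rightarrow> nat \<Rightarrow> 'a set \<Rightarrow> 'a set \<Rightarrow> 'a signed set" where
  "Mk E C k N A = reorient A (om_contract (om_delete E C (Eprefix E k - N)) N)"

definition Nset :: "'a::linorder set \<Rightarrow> 'a signed set \<Rightarrow> nat \<Rightarrow> ('a set \<times> 'a set) set" where
  "Nset E C k = {(N, A). N \<subseteq> Eprefix E k \<and> A \<subseteq> E - Eprefix E k \<and> N \<in> NBC E C \<and>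
                         acyclic_om (Mk E C k N A)}"

definition psi :: "'a::linorder set \<Rightarrow> 'a signed set \<Rightarrow> nat \<Rightarrow> 'a set \<times> 'a set \<Rightarrow> 'a set \<times> 'a set" where
  "psi E C k NA =
     (let N = fst NA; A = snd NA; e = elt E k in
      if e \<notin> A then
        (if acyclic_om (reorient {e} (Mk E C (k - 1) N A)) then (N \<union> {e}, A) else (N, A))
      else (N, A - {e}))"

fun psi_comp :: "'a::linorder set \<Rightarrow> 'a signed set \<Rightarrow> nat \<Rightarrow> 'a set \<times> 'a set \<Rightarrow> 'a set \<times> 'a set" where
  "psi_comp E C 0 = id"
| "psi_comp E C (Suc k) = psi E C (Suc k) \<circ> psi_comp E C k"

end

theory Submission
  imports Defs
begin

text \<open>
  For an independent set N, the minor \<open>_{-A}(M \ X / N)\<close> has a positive circuit iff some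
  circuit of M avoiding X has, after reorienting A, all its negative elements in N: among such
  circuits one whose support outside N is minimal restricts to a positive circuit of the
  contraction, and minimality can be reached by conformal circuit elimination.  This makes
  the sets \<open>\<N>\<^sub>k\<close> and the maps \<open>\<psi>\<^sub>k\<close> explicit.  The inverse of \<open>\<psi>\<^sub>k\<close> removes \<open>e\<^sub>k\<close> from N if it
  lies there, and otherwise reorients \<open>e\<^sub>k\<close> back unless this creates a positive circuit.  Both
  maps land in the right sets because \<open>e\<^sub>k\<close> exceeds all elements of \<open>E\<^sub>k\<^sub>-\<^sub>1\<close>: if both orientations
  of \<open>e\<^sub>k\<close> leave \<open>M\<^sub>k\<^sub>-\<^sub>1\<close> acyclic, adding \<open>e\<^sub>k\<close> to N keeps it NBC, since a broken circuit through \<open>e\<^sub>k\<close>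
  would be positive in one of them; if both orientations are cyclic, eliminating \<open>e\<^sub>k\<close> between
  the two positive circuits shows that \<open>M\<^sub>k\<close> is cyclic (the two circuits are not opposite,
  as N contains no broken circuit).  Finally \<open>\<N>\<^sub>0 = {\<emptyset>} \<times> A(M)\<close> and \<open>\<N>\<^sub>m = NBC \<times> {\<emptyset>}\<close>.
\<close>

section \<open>Signed sets, reorientation and minors\<close>

lemma supp_sneg [simp]: "supp (sneg X) = supp X"
  by (auto simp: supp_def sneg_def)

lemma sneg_sneg [simp]: "sneg (sneg X) = X"
  by (simp add: sneg_def)

lemma supp_reor [simp]: "supp (reor A X) = supp X"
  by (auto simp: supp_def reor_def)

lemma reor_reor [simp]: "reor A (reor A X) = X"
  by (cases X) (auto simp: reor_def)

lemma sneg_reor: "sneg (reor A X) = reor A (sneg X)"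
  by (auto simp: sneg_def reor_def)

lemma reor_insert: "e \<notin> A \<Longrightarrow> reor (insert e A) X = reor {e} (reor A X)"
  by (auto simp: reor_def)

lemma mem_reorient_iff: "Z \<in> reorient A S \<longleftrightarrow> reor A Z \<in> S"
proof
  assume "Z \<in> reorient A S"
  then show "reor A Z \<in> S"
    by (auto simp: reorient_def)
next
  assume "reor A Z \<in> S"
  then have "reor A (reor A Z) \<in> reorient A S"
    unfolding reorient_def by (rule imageI)
  then show "Z \<in> reorient A S"
    by simp
qed

lemma reorient_insert: "e \<notin> A \<Longrightarrow> reorient {e} (reorient A S) = reorient (insert e A) S"
  unfolding reorient_def image_comp by (rule image_cong) (simp_all add: reor_insert[symmetric])

lemma supp_restrict [simp]: "supp (fst Y - N, snd Y - N) = supp Y - N"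
  by (auto simp: supp_def)

lemma mem_om_contract_iff:
  "Z \<in> om_contract G N \<longleftrightarrow>
     (\<exists>Y\<in>G. Z = (fst Y - N, snd Y - N) \<and> supp Y - N \<noteq> {}) \<and>
     (\<forall>Y\<in>G. supp Y - N \<noteq> {} \<longrightarrow> \<not> supp Y - N \<subset> supp Z)"
proof -
  have "Z \<in> om_contract G N \<longleftrightarrow>
     (\<exists>Y\<in>G. Z = (fst Y - N, snd Y - N) \<and> supp Y - N \<noteq> {}) \<and>
     (\<forall>Y\<in>G. supp Y - N \<noteq> {} \<longrightarrow> \<not> supp (fst Y - N, snd Y - N) \<subset> supp Z)"
    unfolding om_contract_def Let_def by blast
  then show ?thesis
    by simp
qed

lemma reor_restrict: "reor A (fst Y - N, snd Y - N) = (fst (reor A Y) - N, snd (reor A Y) - N)"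
  by (auto simp: reor_def)

lemma reorient_om_contract: "reorient A (om_contract C N) = om_contract (reorient A C) N"
proof (rule set_eqI)
  fix Z
  have "reor A Z = (fst Y - N, snd Y - N) \<longleftrightarrow> Z = (fst (reor A Y) - N, snd (reor A Y) - N)" for Y
    by (metis reor_reor reor_restrict)
  then show "Z \<in> reorient A (om_contract C N) \<longleftrightarrow> Z \<in> om_contract (reorient A C) N"
    unfolding mem_reorient_iff mem_om_contract_iff by (simp add: reorient_def)
qed

lemma reorient_om_delete: "reorient A (om_delete E C X) = om_delete E (reorient A C) X"
  by (auto simp: reorient_def om_delete_def)

section \<open>Conformal circuit elimination\<close>

text \<open>Of the oriented matroid axioms, the elimination argument below needs only (C4).\<close>

definition elimination_family :: "'a signed set \<Rightarrow> bool" where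
  "elimination_family G \<longleftrightarrow>
     (\<forall>X\<in>G. fst X \<inter> snd X = {} \<and> finite (supp X)) \<and>
     (\<forall>X\<in>G. \<forall>Y\<in>G. \<forall>e. X \<noteq> sneg Y \<and> X \<noteq> Y \<and> e \<in> fst X \<inter> snd Y \<longrightarrow>
        (\<exists>Z\<in>G. fst Z \<subseteq> fst X \<union> fst Y - {e} \<and> snd Z \<subseteq> snd X \<union> snd Y - {e}))"

lemma elimination_familyD:
  assumes "elimination_family G" "X \<in> G"
  shows "fst X \<inter> snd X = {}" "finite (supp X)"
  using assms unfolding elimination_family_def by auto

lemma elimination_familyE:
  assumes "elimination_family G" "X \<in> G" "Y \<in> G" "X \<noteq> sneg Y" "X \<noteq> Y" "e \<in> fst X" "e \<in> snd Y"
  obtains Z where "Z \<in> G" "fst Z \<subseteq> fst X \<union> fst Y - {e}" "snd Z \<subseteq> snd X \<union> snd Y - {e}"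
  using assms unfolding elimination_family_def by blast

lemma elimination_familyE_opposite:
  assumes G: "elimination_family G" and XY: "X \<in> G" "Y \<in> G" "X \<noteq> sneg Y" "X \<noteq> Y"
    and e: "e \<in> fst X \<inter> snd Y \<union> snd X \<inter> fst Y"
  obtains Z where "Z \<in> G" "fst Z \<subseteq> fst X \<union> fst Y - {e}" "snd Z \<subseteq> snd X \<union> snd Y - {e}"
proof (cases "e \<in> fst X \<inter> snd Y")
  case True
  then show ?thesis
    using elimination_familyE[OF G XY] that by blast
next
  case False
  with e have "e \<in> fst Y" "e \<in> snd X"
    by auto
  moreover have "Y \<noteq> sneg X" "Y \<noteq> X"
    using XY(3,4) by auto
  ultimately obtain Z where "Z \<in> G" "fst Z \<subseteq> fst Y \<union> fst X - {e}" "snd Z \<subseteq> snd Y \<union> snd X - {e}"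
    using elimination_familyE[OF G XY(2,1)] by blast
  then show ?thesis
    by (intro that) auto
qed

lemma elimination_familyI:
  assumes "\<And>X. X \<in> G \<Longrightarrow> fst X \<inter> snd X = {}"
    and "\<And>X. X \<in> G \<Longrightarrow> finite (supp X)"
    and "\<And>X Y e. \<lbrakk>X \<in> G; Y \<in> G; X \<noteq> sneg Y; X \<noteq> Y; e \<in> fst X; e \<in> snd Y\<rbrakk> \<Longrightarrow>
           \<exists>Z\<in>G. fst Z \<subseteq> fst X \<union> fst Y - {e} \<and> snd Z \<subseteq> snd X \<union> snd Y - {e}"
  shows "elimination_family G"
  using assms unfolding elimination_family_def by blast

lemma oriented_matroid_elimination_family:
  assumes "oriented_matroid E C"
  shows "elimination_family C"
proof -
  have "finite E" and "\<forall>X\<in>C. signed_subset E X"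
    using assms by (auto simp: oriented_matroid_def)
  then have "\<forall>X\<in>C. fst X \<inter> snd X = {} \<and> finite (supp X)"
    unfolding signed_subset_def supp_def by (metis finite_Un finite_subset)
  with assms show ?thesis
    unfolding oriented_matroid_def elimination_family_def by blast
qed

lemma elimination_family_om_delete:
  assumes G: "elimination_family G"
  shows "elimination_family (om_delete E G X)"
proof (rule elimination_familyI)
  fix U assume "U \<in> om_delete E G X"
  then show "fst U \<inter> snd U = {}" "finite (supp U)"
    using elimination_familyD[OF G] by (simp_all add: om_delete_def)
next
  fix U V e assume U: "U \<in> om_delete E G X" and V: "V \<in> om_delete E G X"
    and UV: "U \<noteq> sneg V" "U \<noteq> V" "e \<in> fst U" "e \<in> snd V"
  then obtain Z where Z: "Z \<in> G" "fst Z \<subseteq> fst U \<union> fst V - {e}" "snd Z \<subseteq> snd U \<union> snd V - {e}"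
    by (auto simp: om_delete_def elim: elimination_familyE[OF G])
  have "supp Z \<subseteq> E - X"
    using Z U V unfolding om_delete_def supp_def by blast
  with Z show "\<exists>Z\<in>om_delete E G X. fst Z \<subseteq> fst U \<union> fst V - {e} \<and> snd Z \<subseteq> snd U \<union> snd V - {e}"
    unfolding om_delete_def by blast
qed

lemma reor_elimination_bound:
  "fst Z \<subseteq> fst X \<union> fst Y - {e} \<Longrightarrow> snd Z \<subseteq> snd X \<union> snd Y - {e} \<Longrightarrow>
   fst (reor A Z) \<subseteq> fst (reor A X) \<union> fst (reor A Y) - {e} \<and>
   snd (reor A Z) \<subseteq> snd (reor A X) \<union> snd (reor A Y) - {e}"
  by (auto simp: reor_def)

lemma elimination_family_reorient:
  assumes G: "elimination_family G"
  shows "elimination_family (reorient A G)"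
proof (rule elimination_familyI)
  fix U assume "U \<in> reorient A G"
  then obtain X where X: "X \<in> G" "U = reor A X"
    by (auto simp: reorient_def)
  then show "fst U \<inter> snd U = {}"
    using elimination_familyD(1)[OF G X(1)] by (auto simp: reor_def)
  show "finite (supp U)"
    using elimination_familyD(2)[OF G X(1)] X(2) by simp
next
  fix U V e assume "U \<in> reorient A G" "V \<in> reorient A G"
    and UV: "U \<noteq> sneg V" "U \<noteq> V" "e \<in> fst U" "e \<in> snd V"
  then obtain X Y where XY: "X \<in> G" "Y \<in> G" "U = reor A X" "V = reor A Y"
    by (auto simp: reorient_def)
  with UV have ne: "X \<noteq> sneg Y" "X \<noteq> Y"
    by (auto simp: sneg_reor)
  moreover from UV XY have "e \<in> fst X \<inter> snd Y \<union> snd X \<inter> fst Y"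
    by (auto simp: reor_def)
  ultimately obtain Z where Z: "Z \<in> G" "fst Z \<subseteq> fst X \<union> fst Y - {e}" "snd Z \<subseteq> snd X \<union> snd Y - {e}"
    using elimination_familyE_opposite[OF G XY(1,2)] by blast
  then have "reor A Z \<in> reorient A G" "fst (reor A Z) \<subseteq> fst U \<union> fst V - {e}"
    "snd (reor A Z) \<subseteq> snd U \<union> snd V - {e}"
    using XY reor_elimination_bound[of Z X Y e A] by (auto simp: reorient_def)
  then show "\<exists>Z\<in>reorient A G. fst Z \<subseteq> fst U \<union> fst V - {e} \<and> snd Z \<subseteq> snd U \<union> snd V - {e}"
    by blast
qed

lemma elimination_family_conformal_below:
  assumes G: "elimination_family G" and Y: "Y \<in> G"
    and W: "W \<in> G" "supp W - T \<subset> supp Y - T"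
  shows "\<exists>Z\<in>G. supp Z - T \<subset> supp Y - T \<and> fst Z - T \<subseteq> fst Y \<and> snd Z - T \<subseteq> snd Y"
  using W
  \<comment> \<open>eliminate, one at a time, the elements outside T on which W and Y have opposite signs\<close>
proof (induction "card (fst W \<inter> snd Y \<union> snd W \<inter> fst Y - T)" arbitrary: W rule: less_induct)
  case less
  let ?D = "\<lambda>W. fst W \<inter> snd Y \<union> snd W \<inter> fst Y - T"
  show ?case
  proof (cases "?D W = {}")
    case True
    with less.prems(2) have "fst W - T \<subseteq> fst Y" "snd W - T \<subseteq> snd Y"
      by (auto simp: supp_def)
    with less.prems show ?thesis
      by blast
  next
    case False
    then obtain h where h: "h \<in> ?D W" by blast
    from less.prems(2) have "W \<noteq> sneg Y" "W \<noteq> Y"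
      by auto
    moreover from h have "h \<in> fst W \<inter> snd Y \<union> snd W \<inter> fst Y"
      by blast
    ultimately obtain Z where Z: "Z \<in> G" "fst Z \<subseteq> fst W \<union> fst Y - {h}" "snd Z \<subseteq> snd W \<union> snd Y - {h}"
      using elimination_familyE_opposite[OF G less.prems(1) Y] by blast
    have "h \<in> supp Y - T"
      using h by (auto simp: supp_def)
    with Z less.prems(2) have smaller: "supp Z - T \<subset> supp Y - T"
      by (auto simp: supp_def)
    have "finite (?D W)"
      using elimination_familyD(2)[OF G Y] by (rule finite_subset[rotated]) (auto simp: supp_def)
    moreover have "?D Z \<subseteq> ?D W - {h}"
      using Z elimination_familyD(1)[OF G Y] by auto
    ultimately have "card (?D Z) < card (?D W)"
      using h by (meson card_Diff1_less card_mono finite_Diff le_less_trans)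
    with less.hyps Z(1) smaller show ?thesis
      by blast
  qed
qed

lemma elimination_family_minimal_outside:
  assumes G: "elimination_family G" and "Y \<in> G" "snd Y \<subseteq> T"
  obtains Z where "Z \<in> G" "snd Z \<subseteq> T" "\<forall>W\<in>G. \<not> supp W - T \<subset> supp Z - T"
proof -
  obtain Z where Z: "Z \<in> G" "snd Z \<subseteq> T"
    and least: "\<And>Z'. Z' \<in> G \<Longrightarrow> snd Z' \<subseteq> T \<Longrightarrow> card (supp Z - T) \<le> card (supp Z' - T)"
    using ex_has_least_nat[of "\<lambda>Z. Z \<in> G \<and> snd Z \<subseteq> T" Y "\<lambda>Z. card (supp Z - T)"] assms(2,3)
    by blast
  have "\<not> supp W - T \<subset> supp Z - T" if W: "W \<in> G" for W
  proof
    assume smaller: "supp W - T \<subset> supp Z - T"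
    obtain Z' where Z': "Z' \<in> G" "supp Z' - T \<subset> supp Z - T" "snd Z' - T \<subseteq> snd Z"
      using elimination_family_conformal_below[OF G Z(1) W smaller] by blast
    have "card (supp Z' - T) < card (supp Z - T)"
      using Z'(2) elimination_familyD(2)[OF G Z(1)] by (meson finite_Diff psubset_card_mono)
    with least[OF Z'(1)] Z'(3) Z(2) show False
      by fastforce
  qed
  with Z that show ?thesis
    by blast
qed

lemma acyclic_om_contract_iff:
  assumes G: "elimination_family G" and indep: "\<forall>Y\<in>G. \<not> supp Y \<subseteq> N"
  shows "acyclic_om (om_contract G N) \<longleftrightarrow> (\<forall>Y\<in>G. \<not> snd Y \<subseteq> N)"
proof
  assume acyclic: "acyclic_om (om_contract G N)"
  show "\<forall>Y\<in>G. \<not> snd Y \<subseteq> N"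
  proof (intro ballI notI)
    fix Y assume "Y \<in> G" "snd Y \<subseteq> N"
    then obtain Z where Z: "Z \<in> G" "snd Z \<subseteq> N" "\<forall>W\<in>G. \<not> supp W - N \<subset> supp Z - N"
      using elimination_family_minimal_outside[OF G] by blast
    then have "(fst Z - N, snd Z - N) \<in> om_contract G N"
      using indep unfolding mem_om_contract_iff by auto
    with Z(2) acyclic show False
      unfolding acyclic_om_def by (metis Diff_eq_empty_iff snd_conv)
  qed
next
  assume no_negative_in_N: "\<forall>Y\<in>G. \<not> snd Y \<subseteq> N"
  show "acyclic_om (om_contract G N)"
    unfolding acyclic_om_def
  proof
    assume "\<exists>Z\<in>om_contract G N. snd Z = {}"
    then obtain Z where "Z \<in> om_contract G N" "snd Z = {}"
      by blast
    moreover from this(1) obtain Y where "Y \<in> G" "Z = (fst Y - N, snd Y - N)"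
      unfolding mem_om_contract_iff by blast
    ultimately show False
      using no_negative_in_N
      by auto
  qed
qed

section \<open>Circuits and NBC sets\<close>

lemma circuit_supp_subset: "oriented_matroid E C \<Longrightarrow> X \<in> C \<Longrightarrow> supp X \<subseteq> E"
  unfolding oriented_matroid_def signed_subset_def supp_def by auto

lemma circuit_disjoint: "oriented_matroid E C \<Longrightarrow> X \<in> C \<Longrightarrow> fst X \<inter> snd X = {}"
  unfolding oriented_matroid_def signed_subset_def by auto

lemma circuit_sneg: "oriented_matroid E C \<Longrightarrow> X \<in> C \<Longrightarrow> sneg X \<in> C"
  unfolding oriented_matroid_def by auto

lemma circuit_supp_nonempty: "oriented_matroid E C \<Longrightarrow> X \<in> C \<Longrightarrow> supp X \<noteq> {}"
  unfolding oriented_matroid_def supp_def by (cases X) auto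

lemma finite_circuit_supp: "oriented_matroid E C \<Longrightarrow> X \<in> C \<Longrightarrow> finite (supp X)"
  using elimination_familyD(2) oriented_matroid_elimination_family by blast

lemma NBC_independent: "N \<in> NBC E C \<Longrightarrow> Y \<in> C \<Longrightarrow> \<not> supp Y \<subseteq> N"
  unfolding NBC_def by blast

lemma NBC_subset: "N \<in> NBC E C \<Longrightarrow> M \<subseteq> N \<Longrightarrow> M \<in> NBC E C"
  unfolding NBC_def by blast

lemma empty_NBC: "oriented_matroid E C \<Longrightarrow> loopless C \<Longrightarrow> {} \<in> NBC E C"
  unfolding NBC_def loopless_def
  using circuit_supp_nonempty by fastforce

section \<open>Positive circuits of the minors\<close>

text \<open>For independent N (see \<open>acyclic_Mk_iff\<close>), \<open>cyclic_minor E C A N X\<close> says that the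
  minor \<open>_{-A}(M \ X / N)\<close> has a positive circuit.\<close>

definition cyclic_minor :: "'a set \<Rightarrow> 'a signed set \<Rightarrow> 'a set \<Rightarrow> 'a set \<Rightarrow> 'a set \<Rightarrow> bool" where
  "cyclic_minor E C A N X \<longleftrightarrow> (\<exists>Y\<in>C. supp Y \<subseteq> E - X \<and> snd (reor A Y) \<subseteq> N)"

lemma cyclic_minor_iff:
  "cyclic_minor E C A N X \<longleftrightarrow> (\<exists>Y\<in>om_delete E (reorient A C) X. snd Y \<subseteq> N)"
proof -
  have "cyclic_minor E C A N X \<longleftrightarrow> (\<exists>Y\<in>C. supp (reor A Y) \<subseteq> E - X \<and> snd (reor A Y) \<subseteq> N)"
    by (simp add: cyclic_minor_def)
  also have "\<dots> \<longleftrightarrow> (\<exists>Y\<in>reorient A C. supp Y \<subseteq> E - X \<and> snd Y \<subseteq> N)"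
    unfolding reorient_def by blast
  finally show ?thesis
    unfolding om_delete_def by blast
qed

lemma acyclic_Mk_iff:
  assumes om: "oriented_matroid E C" and N: "N \<in> NBC E C"
  shows "acyclic_om (Mk E C k N A) \<longleftrightarrow> \<not> cyclic_minor E C A N (Eprefix E k - N)"
proof -
  let ?G = "om_delete E (reorient A C) (Eprefix E k - N)"
  have "Mk E C k N A = om_contract ?G N"
    by (simp add: Mk_def reorient_om_contract reorient_om_delete)
  moreover have "elimination_family ?G"
    by (rule elimination_family_om_delete[OF elimination_family_reorient[OF
          oriented_matroid_elimination_family[OF om]]])
  moreover have "\<forall>Y\<in>?G. \<not> supp Y \<subseteq> N"
    using NBC_independent[OF N] by (auto simp: om_delete_def reorient_def)
  ultimately show ?thesis
    by (simp add: acyclic_om_contract_iff cyclic_minor_iff)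
qed

lemma Nset_iff:
  assumes "oriented_matroid E C"
  shows "(N, A) \<in> Nset E C k \<longleftrightarrow>
    N \<subseteq> Eprefix E k \<and> A \<subseteq> E - Eprefix E k \<and> N \<in> NBC E C \<and> \<not> cyclic_minor E C A N (Eprefix E k - N)"
  using acyclic_Mk_iff[OF assms] by (auto simp: Nset_def)

lemma Mk_reorient_insert: "e \<notin> A \<Longrightarrow> reorient {e} (Mk E C k N A) = Mk E C k N (insert e A)"
  unfolding Mk_def by (rule reorient_insert)

lemma cyclic_minor_mono_deleted:
  "X \<subseteq> X' \<Longrightarrow> cyclic_minor E C A N X' \<Longrightarrow> cyclic_minor E C A N X"
  unfolding cyclic_minor_def by blast

lemma cyclic_minor_mono_contracted:
  "N \<subseteq> N' \<Longrightarrow> cyclic_minor E C A N X \<Longrightarrow> cyclic_minor E C A N' X"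
  unfolding cyclic_minor_def by blast

lemma cyclic_minor_reorient_deleted:
  assumes "e \<in> X"
  shows "cyclic_minor E C (A - {e}) N X \<longleftrightarrow> cyclic_minor E C A N X"
proof -
  have same: "reor (A - {e}) Y = reor A Y" if "supp Y \<subseteq> E - X" for Y
    using that assms by (auto simp: reor_def supp_def)
  show ?thesis
    unfolding cyclic_minor_def by (intro bex_cong conj_cong refl) (simp add: same)
qed

lemma cyclic_minor_reorient_contracted:
  assumes "e \<in> N" "cyclic_minor E C (insert e A) (N - {e}) X"
  shows "cyclic_minor E C A N X"
proof -
  have "snd (reor A Y) \<subseteq> insert e (snd (reor (insert e A) Y))" for Y
    by (auto simp: reor_def)
  with assms show ?thesis
    unfolding cyclic_minor_def by blast
qed

lemma cyclic_minor_contract_insertD: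
  assumes om: "oriented_matroid E C" and "e \<notin> A" "cyclic_minor E C A (insert e N) X"
  shows "cyclic_minor E C A N X \<or> cyclic_minor E C (insert e A) N X"
proof -
  obtain Y where Y: "Y \<in> C" "supp Y \<subseteq> E - X" "snd (reor A Y) \<subseteq> insert e N"
    using assms(3) unfolding cyclic_minor_def by blast
  have "snd (reor A Y) \<subseteq> N \<or> snd (reor (insert e A) Y) \<subseteq> N"
    using Y(3) circuit_disjoint[OF om Y(1)] \<open>e \<notin> A\<close> by (auto simp: reor_def)
  with Y show ?thesis
    unfolding cyclic_minor_def by blast
qed

lemma reor_disjoint: "fst X \<inter> snd X = {} \<Longrightarrow> fst (reor A X) \<inter> snd (reor A X) = {}"
  by (auto simp: reor_def)

lemma circuit_sign_choice:
  assumes om: "oriented_matroid E C" and X: "X \<in> C" "f \<in> supp X"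
  obtains X' where "X' \<in> C" "supp X' = supp X" "f \<in> fst (reor A X')"
proof (cases "f \<in> fst (reor A X)")
  case True
  with X that show ?thesis by blast
next
  case False
  with X(2) have "f \<in> fst (reor A (sneg X))"
    by (auto simp: reor_def sneg_def supp_def)
  with circuit_sneg[OF om X(1)] that show ?thesis by simp
qed

lemma cyclic_minor_circuit_two_outside:
  assumes om: "oriented_matroid E C" and Y: "Y \<in> C" "supp Y \<subseteq> E - X"
    and two: "supp Y \<subseteq> insert f (insert e N)" "e \<in> supp Y" "f \<in> supp Y" "e \<noteq> f" and "e \<notin> A"
  shows "cyclic_minor E C A N X \<or> cyclic_minor E C (insert e A) N X"
proof -
  obtain Y' where Y': "Y' \<in> C" "supp Y' = supp Y" "f \<in> fst (reor A Y')"
    using circuit_sign_choice[OF om Y(1) two(3)] .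
  have positive: "cyclic_minor E C B N X" if "e \<in> fst (reor B Y')" "f \<in> fst (reor B Y')" for B
  proof -
    have "supp (reor B Y') \<subseteq> insert f (insert e N)"
      using two(1) Y'(2) by simp
    with that reor_disjoint[OF circuit_disjoint[OF om Y'(1)], of B] have "snd (reor B Y') \<subseteq> N"
      by (auto simp: supp_def)
    with Y Y' show ?thesis
      unfolding cyclic_minor_def by auto
  qed
  show ?thesis
  proof (cases "e \<in> fst (reor A Y')")
    case True
    with positive[of A] Y'(3) show ?thesis
      by blast
  next
    case False
    with two(2) Y'(2) \<open>e \<notin> A\<close> have "e \<in> fst (reor (insert e A) Y')"
      by (auto simp: reor_def supp_def)
    moreover have "f \<in> fst (reor (insert e A) Y')"
      using Y'(3) two(4) by (auto simp: reor_def)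
    ultimately show ?thesis
      using positive[of "insert e A"] by blast
  qed
qed

lemma insert_NBC_if_acyclic_both_orientations:
  fixes E :: "'a::linorder set"
  assumes om: "oriented_matroid E C" and N: "N \<in> NBC E C" "N \<subseteq> P"
    and below: "\<forall>x\<in>P. x < e" and "e \<in> E" "e \<notin> A"
    and acyclic: "\<not> cyclic_minor E C A N (P - N)" "\<not> cyclic_minor E C (insert e A) N (P - N)"
  shows "insert e N \<in> NBC E C"
proof -
  have "\<not> supp Y - {Max (supp Y)} \<subseteq> insert e N" if Y: "Y \<in> C" for Y
  proof
    assume broken: "supp Y - {Max (supp Y)} \<subseteq> insert e N"
    define f where "f = Max (supp Y)"
    have f: "f \<in> supp Y" "\<forall>x\<in>supp Y. x \<le> f"
      using finite_circuit_supp[OF om Y] circuit_supp_nonempty[OF om Y] by (simp_all add: f_def)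
    have "\<not> supp Y - {f} \<subseteq> N"
      using N(1) Y by (auto simp: NBC_def f_def)
    with broken have "e \<in> supp Y" "e \<noteq> f"
      by (auto simp: f_def)
    with f have "e < f"
      by force
    with broken below have two: "supp Y \<subseteq> insert f (insert e N)" and "f \<notin> P" "e \<notin> P"
      by (auto simp: f_def)
    then have "supp Y \<subseteq> E - (P - N)"
      using circuit_supp_subset[OF om Y] by auto
    from cyclic_minor_circuit_two_outside[OF om Y this two \<open>e \<in> supp Y\<close> f(1) \<open>e \<noteq> f\<close> \<open>e \<notin> A\<close>]
    show False
      using acyclic by blast
  qed
  moreover have "insert e N \<subseteq> E"
    using N(1) \<open>e \<in> E\<close> by (auto simp: NBC_def)
  ultimately show ?thesis
    unfolding NBC_def by blast
qed

lemma NBC_insert_greater_independent: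
  fixes E :: "'a::linorder set"
  assumes om: "oriented_matroid E C" and N: "N \<in> NBC E C" "\<forall>x\<in>N. x < e" and Y: "Y \<in> C"
  shows "\<not> supp Y \<subseteq> insert e N"
proof
  assume sub: "supp Y \<subseteq> insert e N"
  with NBC_independent[OF N(1) Y] have "e \<in> supp Y"
    by blast
  with sub N(2) finite_circuit_supp[OF om Y] have "Max (supp Y) = e"
    by (intro Max_eqI) fastforce+
  with sub N(1) Y show False
    unfolding NBC_def by blast
qed

lemma cyclic_minor_eliminate:
  assumes om: "oriented_matroid E C" and Y: "Y1 \<in> C" "Y2 \<in> C" "supp Y1 \<subseteq> E - X" "supp Y2 \<subseteq> E - X"
    and ne: "reor A Y1 \<noteq> sneg (reor A Y2)" "reor A Y1 \<noteq> reor A Y2"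
    and e: "e \<in> fst (reor A Y1)" "e \<in> snd (reor A Y2)"
    and negative: "snd (reor A Y1) \<union> snd (reor A Y2) - {e} \<subseteq> N"
  shows "cyclic_minor E C A N (insert e X)"
proof -
  have "reor A Y1 \<in> reorient A C" "reor A Y2 \<in> reorient A C"
    using Y by (auto simp: reorient_def)
  with ne e obtain Z where Z: "Z \<in> reorient A C"
    "fst Z \<subseteq> fst (reor A Y1) \<union> fst (reor A Y2) - {e}" "snd Z \<subseteq> snd (reor A Y1) \<union> snd (reor A Y2) - {e}"
    using elimination_familyE[OF elimination_family_reorient[OF oriented_matroid_elimination_family[OF om]]]
    by metis
  then obtain Y where "Y \<in> C" "Z = reor A Y"
    by (auto simp: reorient_def)
  moreover have "supp Z \<subseteq> E - insert e X"
    using Z(2,3) Y(3,4) unfolding supp_def reor_def by auto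
  moreover have "snd Z \<subseteq> N"
    using Z(3) negative by blast
  ultimately show ?thesis
    unfolding cyclic_minor_def by auto
qed

lemma cyclic_minor_delete_if_cyclic_both_orientations:
  fixes E :: "'a::linorder set"
  assumes om: "oriented_matroid E C" and N: "N \<in> NBC E C" "N \<subseteq> P"
    and below: "\<forall>x\<in>P. x < e" and "e \<notin> A"
    and cyclic: "cyclic_minor E C A N (P - N)" "cyclic_minor E C (insert e A) N (P - N)"
  shows "cyclic_minor E C A N (insert e (P - N))"
proof (rule ccontr)
  assume acyclic: "\<not> cyclic_minor E C A N (insert e (P - N))"
  have N_below: "\<forall>x\<in>N. x < e" and "e \<notin> N"
    using N(2) below by blast+
  obtain Y1 where Y1: "Y1 \<in> C" "supp Y1 \<subseteq> E - (P - N)" "snd (reor A Y1) \<subseteq> N"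
    using cyclic(1) unfolding cyclic_minor_def by blast
  obtain Y2 where Y2: "Y2 \<in> C" "supp Y2 \<subseteq> E - (P - N)" "snd (reor (insert e A) Y2) \<subseteq> N"
    using cyclic(2) unfolding cyclic_minor_def by blast
  have "e \<in> supp Y1"
    using acyclic Y1 unfolding cyclic_minor_def by blast
  with Y1(3) \<open>e \<notin> N\<close> have e_Y1: "e \<in> fst (reor A Y1)"
    by (auto simp: supp_def reor_def)
  have "e \<in> supp Y2"
  proof (rule ccontr)
    assume "e \<notin> supp Y2"
    then have "reor (insert e A) Y2 = reor A Y2"
      by (auto simp: reor_def supp_def)
    with Y2 \<open>e \<notin> supp Y2\<close> acyclic show False
      unfolding cyclic_minor_def by auto
  qed
  with Y2(3) \<open>e \<notin> N\<close> \<open>e \<notin> A\<close> have e_Y2: "e \<in> snd (reor A Y2)"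
    and snd_Y2: "snd (reor A Y2) - {e} \<subseteq> N"
    by (auto simp: supp_def reor_def)
  have "reor A Y1 \<noteq> sneg (reor A Y2)"
  proof
    assume "reor A Y1 = sneg (reor A Y2)"
    with Y1(3) snd_Y2 have "supp (reor A Y1) \<subseteq> insert e N"
      by (auto simp: sneg_def supp_def)
    with NBC_insert_greater_independent[OF om N(1) N_below Y1(1)] show False
      by simp
  qed
  moreover have "reor A Y1 \<noteq> reor A Y2"
    using e_Y1 e_Y2 reor_disjoint[OF circuit_disjoint[OF om Y2(1)], of A] by auto
  ultimately have "cyclic_minor E C A N (insert e (P - N))"
    using cyclic_minor_eliminate[OF om Y1(1) Y2(1) Y1(2) Y2(2) _ _ e_Y1 e_Y2] Y1(3) snd_Y2 by blast
  with acyclic show False ..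
qed

section \<open>The step maps\<close>

lemma Eprefix_Suc:
  "j < card E \<Longrightarrow> Eprefix E (Suc j) = insert (elt E (Suc j)) (Eprefix E j)"
  unfolding Eprefix_def elt_def by (simp add: take_Suc_conv_app_nth)

lemma elt_in:
  assumes "j < card E"
  shows "elt E (Suc j) \<in> E"
proof -
  from assms have "finite E"
    using card.infinite by fastforce
  with assms show ?thesis
    unfolding elt_def using nth_mem[of j "sorted_list_of_set E"] by simp
qed

lemma Eprefix_less_elt:
  assumes "j < card E" "x \<in> Eprefix E j"
  shows "x < elt E (Suc j)"
proof -
  let ?L = "sorted_list_of_set E"
  from assms(2) obtain i where "i < j" "x = ?L ! i"
    unfolding Eprefix_def by (auto simp: in_set_conv_nth)
  with assms(1) show ?thesis
    unfolding elt_def by (simp add: sorted_wrt_nth_less)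
qed

lemma Eprefix_card: "finite E \<Longrightarrow> Eprefix E (card E) = E"
  by (simp add: Eprefix_def)

locale psi_step =
  fixes E :: "'a::linorder set" and C :: "'a signed set" and j :: nat
  assumes om: "oriented_matroid E C" and j_less: "j < card E"
begin

text \<open>With \<open>k = Suc j\<close>, \<open>e\<close> and \<open>P\<close> are the paper's \<open>e\<^sub>k\<close> and \<open>E\<^sub>k\<^sub>-\<^sub>1\<close>.\<close>

abbreviation e where "e \<equiv> elt E (Suc j)"
abbreviation P where "P \<equiv> Eprefix E j"

lemma e_in: "e \<in> E"
  using elt_in[OF j_less] .

lemma P_less_e: "x \<in> P \<Longrightarrow> x < e"
  using Eprefix_less_elt[OF j_less] .

lemma e_notin_P: "e \<notin> P"
  using P_less_e by blast

lemma Eprefix_Suc_j: "Eprefix E (Suc j) = insert e P"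
  using Eprefix_Suc[OF j_less] .

lemma Nset_prev_iff:
  "(N, A) \<in> Nset E C j \<longleftrightarrow>
     N \<subseteq> P \<and> A \<subseteq> E - P \<and> N \<in> NBC E C \<and> \<not> cyclic_minor E C A N (P - N)"
  by (rule Nset_iff[OF om])

lemma Nset_Suc_iff:
  "(N, A) \<in> Nset E C (Suc j) \<longleftrightarrow>
     N \<subseteq> insert e P \<and> A \<subseteq> E - insert e P \<and> N \<in> NBC E C \<and>
     \<not> cyclic_minor E C A N (insert e P - N)"
  using Nset_iff[OF om] by (simp add: Eprefix_Suc_j)

lemma psi_eq:
  assumes "N \<in> NBC E C"
  shows "psi E C (Suc j) (N, A) =
    (if e \<in> A then (N, A - {e})
     else if cyclic_minor E C (insert e A) N (P - N) then (N, A)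
     else (insert e N, A))"
  using acyclic_Mk_iff[OF om assms] Mk_reorient_insert[of e A E C j N]
  by (auto simp: psi_def Let_def)

definition psi_inv :: "'a set \<times> 'a set \<Rightarrow> 'a set \<times> 'a set" where
  "psi_inv = (\<lambda>(N, A).
     if e \<in> N then (N - {e}, A)
     else if cyclic_minor E C (insert e A) N (P - N) then (N, A)
     else (N, insert e A))"

lemma psi_in_Nset:
  assumes "(N, A) \<in> Nset E C j"
  shows "psi E C (Suc j) (N, A) \<in> Nset E C (Suc j)"
proof -
  have N: "N \<subseteq> P" "N \<in> NBC E C" and A: "A \<subseteq> E - P"
    and acyclic: "\<not> cyclic_minor E C A N (P - N)"
    using assms by (simp_all add: Nset_prev_iff)
  have "e \<notin> N"
    using N(1) e_notin_P by blast
  have acyclic_Suc: "\<not> cyclic_minor E C A N (insert e P - N)"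
    using acyclic cyclic_minor_mono_deleted[of "P - N" "insert e P - N"] by blast
  consider "e \<in> A" | "e \<notin> A" "cyclic_minor E C (insert e A) N (P - N)"
    | "e \<notin> A" "\<not> cyclic_minor E C (insert e A) N (P - N)"
    by blast
  then show ?thesis
  proof cases
    case 1
    with acyclic_Suc \<open>e \<notin> N\<close> have "\<not> cyclic_minor E C (A - {e}) N (insert e P - N)"
      by (simp add: cyclic_minor_reorient_deleted)
    with 1 N A show ?thesis
      by (auto simp: psi_eq Nset_Suc_iff)
  next
    case 2
    with N A acyclic_Suc show ?thesis
      by (auto simp: psi_eq Nset_Suc_iff)
  next
    case 3
    have "insert e N \<in> NBC E C"
      using insert_NBC_if_acyclic_both_orientations[OF om N(2,1) _ e_in] P_less_e 3 acyclic by blast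
    moreover have "\<not> cyclic_minor E C A (insert e N) (P - N)"
      using cyclic_minor_contract_insertD[OF om \<open>e \<notin> A\<close>] acyclic 3(2) by blast
    moreover have "insert e P - insert e N = P - N"
      using e_notin_P by blast
    ultimately show ?thesis
      using 3 N A by (auto simp: psi_eq Nset_Suc_iff)
  qed
qed

lemma psi_inv_in_Nset:
  assumes "(N, A) \<in> Nset E C (Suc j)"
  shows "psi_inv (N, A) \<in> Nset E C j"
proof -
  have N: "N \<subseteq> insert e P" "N \<in> NBC E C" and A: "A \<subseteq> E - insert e P"
    and acyclic: "\<not> cyclic_minor E C A N (insert e P - N)"
    using assms by (simp_all add: Nset_Suc_iff)
  have "e \<notin> A"
    using A by blast
  consider "e \<in> N" | "e \<notin> N" "cyclic_minor E C (insert e A) N (P - N)"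
    | "e \<notin> N" "\<not> cyclic_minor E C (insert e A) N (P - N)"
    by blast
  then show ?thesis
  proof cases
    case 1
    then have "P - (N - {e}) = insert e P - N"
      using e_notin_P by blast
    with acyclic have "\<not> cyclic_minor E C A (N - {e}) (P - (N - {e}))"
      using cyclic_minor_mono_contracted[of "N - {e}" N] by auto
    with 1 N A show ?thesis
      using NBC_subset[OF N(2)] by (auto simp: psi_inv_def Nset_prev_iff)
  next
    case 2
    have "insert e P - N = insert e (P - N)"
      using 2(1) by blast
    with acyclic 2 have "\<not> cyclic_minor E C A N (P - N)"
      using cyclic_minor_delete_if_cyclic_both_orientations[OF om N(2) _ _ \<open>e \<notin> A\<close>] P_less_e N(1)
      by auto
    with 2 N A show ?thesis
      by (auto simp: psi_inv_def Nset_prev_iff)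
  next
    case 3
    with N A e_in e_notin_P show ?thesis
      by (auto simp: psi_inv_def Nset_prev_iff)
  qed
qed

lemma psi_inv_psi:
  assumes "(N, A) \<in> Nset E C j"
  shows "psi_inv (psi E C (Suc j) (N, A)) = (N, A)"
proof -
  have "N \<in> NBC E C" "e \<notin> N" "\<not> cyclic_minor E C A N (P - N)"
    using assms e_notin_P by (auto simp: Nset_prev_iff)
  then show ?thesis
    by (auto simp: psi_eq psi_inv_def insert_absorb)
qed

lemma psi_psi_inv:
  assumes "(N, A) \<in> Nset E C (Suc j)"
  shows "psi E C (Suc j) (psi_inv (N, A)) = (N, A)"
proof (cases "e \<in> N")
  case True
  have "N \<in> NBC E C" "e \<notin> A" "\<not> cyclic_minor E C A N (insert e P - N)"
    using assms by (auto simp: Nset_Suc_iff)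
  moreover have "P - (N - {e}) = insert e P - N"
    using True e_notin_P by blast
  ultimately show ?thesis
    using True NBC_subset[of N E C "N - {e}"] cyclic_minor_reorient_contracted[OF True]
    by (auto simp: psi_eq psi_inv_def insert_absorb)
next
  case False
  have "N \<in> NBC E C" "e \<notin> A"
    using assms by (auto simp: Nset_Suc_iff)
  with False show ?thesis
    by (auto simp: psi_eq psi_inv_def)
qed

lemma bij_betw_psi_Suc: "bij_betw (psi E C (Suc j)) (Nset E C j) (Nset E C (Suc j))"
proof (rule bij_betw_byWitness[where f' = psi_inv])
  show "\<forall>p\<in>Nset E C j. psi_inv (psi E C (Suc j) p) = p"
    using psi_inv_psi by auto
  show "\<forall>q\<in>Nset E C (Suc j). psi E C (Suc j) (psi_inv q) = q"
    using psi_psi_inv by auto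
  show "psi E C (Suc j) ` Nset E C j \<subseteq> Nset E C (Suc j)"
    using psi_in_Nset by auto
  show "psi_inv ` Nset E C (Suc j) \<subseteq> Nset E C j"
    using psi_inv_in_Nset by auto
qed

end

lemma bij_betw_psi:
  assumes "oriented_matroid E C" "k \<in> {1..card E}"
  shows "bij_betw (psi E C k) (Nset E C (k - 1)) (Nset E C k)"
proof -
  from assms(2) have "k - 1 < card E" "Suc (k - 1) = k"
    by auto
  with psi_step.bij_betw_psi_Suc[of E C "k - 1"] assms(1) show ?thesis
    by (simp add: psi_step_def)
qed

lemma bij_betw_psi_comp:
  assumes om: "oriented_matroid E C"
  shows "j \<le> card E \<Longrightarrow> bij_betw (psi_comp E C j) (Nset E C 0) (Nset E C j)"
proof (induction j)
  case 0
  then show ?case by (simp add: bij_betw_def)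
next
  case (Suc j)
  have "bij_betw (psi E C (Suc j)) (Nset E C j) (Nset E C (Suc j))"
    using bij_betw_psi[OF om, of "Suc j"] Suc.prems by simp
  with Suc.IH[OF Suc_leD[OF Suc.prems]]
  have "bij_betw (psi E C (Suc j) \<circ> psi_comp E C j) (Nset E C 0) (Nset E C (Suc j))"
    by (rule bij_betw_trans)
  then show ?case
    by (simp only: psi_comp.simps)
qed

lemma Nset_0:
  assumes om: "oriented_matroid E C" and "loopless C"
  shows "Nset E C 0 = (\<lambda>A. ({}, A)) ` acyc_reorientations E C"
proof -
  have "cyclic_minor E C A {} {} \<longleftrightarrow> \<not> acyclic_om (reorient A C)" for A
    using circuit_supp_subset[OF om] by (auto simp: cyclic_minor_def acyclic_om_def reorient_def)
  then show ?thesis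
    using empty_NBC[OF assms]
    by (auto simp: Nset_iff[OF om] Eprefix_def acyc_reorientations_def)
qed

lemma Nset_card:
  assumes om: "oriented_matroid E C"
  shows "Nset E C (card E) = (\<lambda>N. (N, {})) ` NBC E C"
proof -
  have "finite E"
    using om by (simp add: oriented_matroid_def)
  have "(N, A) \<in> Nset E C (card E) \<longleftrightarrow> A = {} \<and> N \<in> NBC E C" for N A
  proof -
    have "\<not> cyclic_minor E C {} N (E - N)" if "N \<in> NBC E C"
      using NBC_independent[OF that] unfolding cyclic_minor_def by blast
    moreover have "N \<subseteq> E" if "N \<in> NBC E C"
      using that by (simp add: NBC_def)
    ultimately show ?thesis
      using Nset_iff[OF om, of N A "card E"] by (auto simp: Eprefix_card[OF \<open>finite E\<close>])
  qed
  then show ?thesis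
    by auto
qed

theorem mainTheorem1:
  fixes E :: "'a::linorder set" and C :: "'a signed set"
  assumes "oriented_matroid E C" and "loopless C"
  shows "(\<forall>k\<in>{1..card E}. bij_betw (psi E C k) (Nset E C (k - 1)) (Nset E C k)) \<and>
         bij_betw (\<lambda>A. THE N. psi_comp E C (card E) ({}, A) = (N, {}))
                  (acyc_reorientations E C) (NBC E C)"
proof
  show "\<forall>k\<in>{1..card E}. bij_betw (psi E C k) (Nset E C (k - 1)) (Nset E C k)"
    using bij_betw_psi[OF assms(1)] by blast
  let ?\<Psi> = "psi_comp E C (card E)"
  have into_Nset_0: "bij_betw (\<lambda>A. ({}, A)) (acyc_reorientations E C) (Nset E C 0)"
    unfolding Nset_0[OF assms] by (rule bij_betw_imageI) (auto simp: inj_on_def)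
  have \<Psi>: "bij_betw ?\<Psi> (Nset E C 0) (Nset E C (card E))"
    using bij_betw_psi_comp[OF assms(1)] by simp
  have fst_Nset_card: "bij_betw fst (Nset E C (card E)) (NBC E C)"
    unfolding Nset_card[OF assms(1)] by (rule bij_betw_imageI) (auto simp: inj_on_def image_image)
  have bij: "bij_betw (fst \<circ> ?\<Psi> \<circ> (\<lambda>A. ({}, A))) (acyc_reorientations E C) (NBC E C)"
    by (rule bij_betw_trans[OF into_Nset_0 bij_betw_trans[OF \<Psi> fst_Nset_card]])
  show "bij_betw (\<lambda>A. THE N. ?\<Psi> ({}, A) = (N, {})) (acyc_reorientations E C) (NBC E C)"
  proof (rule bij_betw_cong[THEN iffD1, OF _ bij])
    fix A assume "A \<in> acyc_reorientations E C"
    then have "?\<Psi> ({}, A) \<in> Nset E C (card E)"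
      using bij_betw_psi_comp[OF assms(1), of "card E"] by (auto simp: Nset_0[OF assms] bij_betw_def)
    then obtain N where "?\<Psi> ({}, A) = (N, {})"
      by (auto simp: Nset_card[OF assms(1)])
    then show "(fst \<circ> ?\<Psi> \<circ> (\<lambda>A. ({}, A))) A = (THE N. ?\<Psi> ({}, A) = (N, {}))"
      by simp
  qed
qed

end
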